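(* Let $K\subset\mathbb R^n$ be a convex body with $rB_2^n\subset K$ for some $r\in(0,1]$. Let $N=N(K,B_2^n)$ and let $x_1,\dots,x_N\in\mathbb R^n$ satisfy $K\subset\bigcup_{i=1}^N(x_i+B_2^n)$. For $\varepsilon\in(0,1)$ let $A_\varepsilon=\{\theta\in S^{n-1}:|\langle\hat x_i,\theta\rangle|\le\varepsilon$ for all $i$ with $x_i\ne0\}$, where $\hat x=x/|x|$. Then for every $\theta\in A_\varepsilon$ and every outer unit normal $u$ of $K$ at the boundary point $\rho_K(\theta)\theta$, one has \[ \langle u,\theta\rangle\ge r\sqrt{1-\varepsilon^2}. \]
   Context: A convex body is a compact convex set with nonempty interior. $B_2^n$ is the closed Euclidean unit ball, $S^{n-1}$ the unit sphere. The covering number is $N(K,T)=\min\{N:\exists x_1,\dots,x_N\in\mathbb R^n,\ K\subset\bigcup_{i=1}^N(x_i+T)\}$. The radial function is $\rho_K(\theta)=\sup\{t\ge0:t\theta\in K\}$. For $x\in\partial K$, an outer unit normal of $K$ at $x$ is a vector $u\in S^{n-1}$ with $\langle u,x\rangle=h_K(u):=\sup_{y\in K}\langle y,u\rangle$ (the set of these is the normal cone $n_K(x)$). *)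

theory Defs
  imports "HOL-Analysis.Analysis"
begin

definition convex_body :: "'a::euclidean_space set \<Rightarrow> bool" where
  "convex_body K \<longleftrightarrow> convex K \<and> compact K \<and> interior K \<noteq> {}"

definition covering_number :: "'a::euclidean_space set \<Rightarrow> 'a set \<Rightarrow> nat" where
  "covering_number K T = (LEAST N. \<exists>x::nat \<Rightarrow> 'a. K \<subseteq> (\<Union>i<N. (\<lambda>y. x i + y) ` T))"

definition radial_function :: "'a::euclidean_space set \<Rightarrow> 'a \<Rightarrow> real" where
  "radial_function K \<theta> = Sup {t. t \<ge> 0 \<and> t *\<^sub>R \<theta> \<in> K}"

definition support_function :: "'a::euclidean_space set \<Rightarrow> 'a \<Rightarrow> real" where
  "support_function K u = Sup ((\<lambda>y. y \<bullet> u) ` K)"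

definition normal_cone :: "'a::euclidean_space set \<Rightarrow> 'a \<Rightarrow> 'a set" where
  "normal_cone K x = {u. norm u = 1 \<and> x \<bullet> u = support_function K u}"

end

theory Submission
  imports Defs
begin

text \<open>Write \<open>\<rho> = \<rho>\<^sub>K(\<theta>)\<close>. Since \<open>r u \<in> K\<close>, the normal \<open>u\<close> at \<open>\<rho>\<theta>\<close> satisfies
  \<open>\<rho>\<langle>u,\<theta>\<rangle> = h\<^sub>K(u) \<ge> r\<close>. On the other hand \<open>\<rho>\<theta>\<close> lies in some ball \<open>x\<^sub>i + B\<^sub>2\<^sup>n\<close>, and
  \<open>\<theta>\<close> is almost orthogonal to \<open>x\<^sub>i\<close>, so \<open>1 \<ge> |\<rho>\<theta> - x\<^sub>i|\<^sup>2 \<ge> \<rho>\<^sup>2(1 - \<epsilon>\<^sup>2)\<close>.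
  Combining, \<open>\<langle>u,\<theta>\<rangle> \<ge> r/\<rho> \<ge> r\<surd>(1 - \<epsilon>\<^sup>2)\<close>.\<close>

lemma bdd_above_radial_set:
  fixes K :: "'a::real_normed_vector set"
  assumes "bounded K" "\<theta> \<noteq> 0"
  shows "bdd_above {t. 0 \<le> t \<and> t *\<^sub>R \<theta> \<in> K}"
proof -
  obtain B where B: "\<forall>y\<in>K. norm y \<le> B"
    using assms(1) bounded_iff by auto
  have "t \<le> B / norm \<theta>" if "0 \<le> t" "t *\<^sub>R \<theta> \<in> K" for t
  proof -
    have "t * norm \<theta> \<le> B"
      using B that by (metis abs_of_nonneg norm_scaleR)
    then show ?thesis
      using assms(2) by (simp add: field_simps)
  qed
  then show ?thesis
    by (intro bdd_aboveI[where M="B / norm \<theta>"]) auto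
qed

lemma radial_function_upper:
  assumes "bounded K" "\<theta> \<noteq> 0" "0 \<le> t" "t *\<^sub>R \<theta> \<in> K"
  shows "t \<le> radial_function K \<theta>"
  unfolding radial_function_def
  using bdd_above_radial_set[OF assms(1,2)] assms(3,4) by (auto intro: cSup_upper)

lemma radial_function_in:
  assumes "compact K" "\<theta> \<noteq> 0" "0 \<in> K"
  shows "radial_function K \<theta> *\<^sub>R \<theta> \<in> K"
proof -
  define S where "S = {t. 0 \<le> t \<and> t *\<^sub>R \<theta> \<in> K}"
  have "S = {t. 0 \<le> t} \<inter> (\<lambda>t. t *\<^sub>R \<theta>) -` K"
    unfolding S_def by auto
  moreover have "closed ((\<lambda>t::real. t *\<^sub>R \<theta>) -` K)"
    using assms(1) by (intro continuous_closed_vimage compact_imp_closed) (auto intro!: continuous_intros)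
  ultimately have "closed S"
    by (auto intro!: closed_Int closed_Collect_le continuous_intros)
  moreover have "bdd_above S"
    unfolding S_def using bdd_above_radial_set[OF compact_imp_bounded[OF assms(1)] assms(2)] .
  moreover have "0 \<in> S"
    unfolding S_def using assms(3) by simp
  ultimately have "Sup S \<in> S"
    using closed_contains_Sup by blast
  then show ?thesis
    unfolding radial_function_def S_def by simp
qed

lemma support_function_upper:
  assumes "bounded K" "y \<in> K"
  shows "y \<bullet> u \<le> support_function K u"
proof -
  obtain B where "\<forall>z\<in>K. norm z \<le> B"
    using assms(1) bounded_iff by auto
  then have "\<forall>z\<in>K. z \<bullet> u \<le> B * norm u"
    by (metis Cauchy_Schwarz_ineq2 abs_le_D1 mult_right_mono norm_ge_zero order_trans)
  then have "bdd_above ((\<lambda>z. z \<bullet> u) ` K)"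
    by (auto intro: bdd_aboveI)
  then show ?thesis
    unfolding support_function_def using assms(2) by (auto intro: cSup_upper)
qed

lemma norm_diff_ge_if_nearly_orthogonal:
  fixes \<theta> x :: "'a::real_inner"
  assumes "norm \<theta> = 1" "\<bar>x \<bullet> \<theta>\<bar> \<le> \<epsilon> * norm x"
  shows "\<rho>\<^sup>2 * (1 - \<epsilon>\<^sup>2) \<le> (norm (\<rho> *\<^sub>R \<theta> - x))\<^sup>2"
proof -
  define t where "t = norm x"
  have "\<rho> * (x \<bullet> \<theta>) \<le> \<bar>\<rho>\<bar> * (\<epsilon> * t)"
    using assms(2) unfolding t_def
    by (metis abs_ge_self abs_mult mult_left_mono abs_ge_zero order_trans)
  moreover have "(norm (\<rho> *\<^sub>R \<theta> - x))\<^sup>2 = \<rho>\<^sup>2 - 2 * \<rho> * (x \<bullet> \<theta>) + t\<^sup>2"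
    using assms(1) unfolding t_def power2_norm_eq_inner norm_eq_1
    by (simp add: inner_diff_left inner_diff_right inner_commute power2_eq_square algebra_simps)
  moreover have "\<rho>\<^sup>2 * (1 - \<epsilon>\<^sup>2) + (t - \<bar>\<rho>\<bar> * \<epsilon>)\<^sup>2 = \<rho>\<^sup>2 - 2 * (\<bar>\<rho>\<bar> * (\<epsilon> * t)) + t\<^sup>2"
    by (simp add: power2_eq_square algebra_simps)
  ultimately show ?thesis
    using zero_le_power2[of "t - \<bar>\<rho>\<bar> * \<epsilon>"] by linarith
qed

lemma mult_sqrt_le_one_if_nearly_orthogonal:
  fixes \<theta> x :: "'a::real_inner"
  assumes "norm \<theta> = 1" "\<bar>x \<bullet> \<theta>\<bar> \<le> \<epsilon> * norm x" "norm (\<rho> *\<^sub>R \<theta> - x) \<le> 1"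
    and "0 \<le> \<rho>" "\<bar>\<epsilon>\<bar> \<le> 1"
  shows "\<rho> * sqrt (1 - \<epsilon>\<^sup>2) \<le> 1"
proof -
  have "(norm (\<rho> *\<^sub>R \<theta> - x))\<^sup>2 \<le> 1"
    using assms(3) by (simp add: power_le_one)
  then have "\<rho>\<^sup>2 * (1 - \<epsilon>\<^sup>2) \<le> 1"
    using norm_diff_ge_if_nearly_orthogonal[OF assms(1,2)] order_trans by blast
  moreover have "\<rho> * sqrt (1 - \<epsilon>\<^sup>2) = sqrt (\<rho>\<^sup>2 * (1 - \<epsilon>\<^sup>2))"
    using assms(4) by (simp add: real_sqrt_mult)
  ultimately show ?thesis
    by simp
qed

lemma mult_le_if_le_mult_and_mult_le_one:
  fixes r \<rho> c s :: real
  assumes "0 < r" "0 \<le> \<rho>" "r \<le> \<rho> * c" "0 \<le> s" "\<rho> * s \<le> 1"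
  shows "r * s \<le> c"
proof -
  have "0 \<le> c"
  proof (rule ccontr)
    assume "\<not> 0 \<le> c"
    then have "\<rho> * c \<le> 0"
      using assms(2) by (simp add: mult_nonneg_nonpos)
    then show False
      using assms(1,3) by linarith
  qed
  have "r * s \<le> \<rho> * c * s"
    using assms(3,4) by (simp add: mult_right_mono)
  also have "\<dots> = (\<rho> * s) * c"
    by simp
  also have "\<dots> \<le> c"
    using assms(5) \<open>0 \<le> c\<close> by (metis mult_right_mono mult_1)
  finally show ?thesis .
qed

theorem proposition2p4:
  fixes K :: "'a::euclidean_space set" and r \<epsilon> :: real and N :: nat
    and x :: "nat \<Rightarrow> 'a"
  assumes "convex_body K"
    and "0 < r" "r \<le> 1" "cball 0 r \<subseteq> K"
    and "N = covering_number K (cball 0 1)"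
    and "K \<subseteq> (\<Union>i<N. (\<lambda>y. x i + y) ` cball 0 1)"
    and "0 < \<epsilon>" "\<epsilon> < 1"
    and "\<theta> \<in> {\<theta>. norm \<theta> = 1 \<and>
            (\<forall>i<N. x i \<noteq> 0 \<longrightarrow> \<bar>(x i /\<^sub>R norm (x i)) \<bullet> \<theta>\<bar> \<le> \<epsilon>)}"
    and "u \<in> normal_cone K (radial_function K \<theta> *\<^sub>R \<theta>)"
  shows "u \<bullet> \<theta> \<ge> r * sqrt (1 - \<epsilon>\<^sup>2)"
proof -
  define \<rho> where "\<rho> = radial_function K \<theta>"
  have "compact K" and bK: "bounded K"
    using assms(1) compact_imp_bounded unfolding convex_body_def by auto
  have \<theta>: "norm \<theta> = 1" "\<theta> \<noteq> 0"
    using assms(9) by auto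
  have u: "norm u = 1" "\<rho> * (u \<bullet> \<theta>) = support_function K u"
    using assms(10) unfolding normal_cone_def \<rho>_def by (auto simp: inner_commute)
  have "r \<le> \<rho>"
    unfolding \<rho>_def using assms(2,4) \<theta> by (intro radial_function_upper bK) auto
  have "r \<le> \<rho> * (u \<bullet> \<theta>)"
    using support_function_upper[OF bK, of "r *\<^sub>R u" u] subsetD[OF assms(4), of "r *\<^sub>R u"] assms(2) u
    by (simp add: dot_square_norm)
  have "\<rho> *\<^sub>R \<theta> \<in> K"
    unfolding \<rho>_def using assms(2,4) by (intro radial_function_in \<open>compact K\<close> \<theta>(2)) auto
  then obtain i where i: "i < N" "norm (\<rho> *\<^sub>R \<theta> - x i) \<le> 1"
    using assms(6) by (force simp: dist_norm norm_minus_commute)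
  have "\<bar>x i \<bullet> \<theta>\<bar> \<le> \<epsilon> * norm (x i)"
    using assms(9) i(1) by (cases "x i = 0") (auto simp: divide_simps)
  moreover have "0 \<le> \<rho>" "\<bar>\<epsilon>\<bar> \<le> 1"
    using \<open>r \<le> \<rho>\<close> assms(2,7,8) by auto
  ultimately have "\<rho> * sqrt (1 - \<epsilon>\<^sup>2) \<le> 1"
    by (rule mult_sqrt_le_one_if_nearly_orthogonal[OF \<theta>(1) _ i(2)])
  moreover have "0 \<le> sqrt (1 - \<epsilon>\<^sup>2)"
    using \<open>\<bar>\<epsilon>\<bar> \<le> 1\<close> by (simp add: abs_square_le_1)
  ultimately show ?thesis
    using mult_le_if_le_mult_and_mult_le_one[OF assms(2) \<open>0 \<le> \<rho>\<close> \<open>r \<le> \<rho> * (u \<bullet> \<theta>)\<close>]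
    by simp
qed

end
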